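(* Let $A$ be a distributive meet-complemented lattice in which $\Box x$, $\Diamond x$ exist for every $x\in A$ and in which the relative meet-complement $a\to b=\max\{c\in A: a\wedge c\le b\}$ exists for all $a,b\in A$. Then for all $a,b\in A$: (1) $\Box(a\to b)\le\Box a\to\Box b$; (2) $\Box(a\to b)\le\Diamond a\to\Diamond b$; (3) $\Diamond a\to\Box b\le\Box(a\to b)$.
   Context: A meet-complemented lattice is a lattice $(L,\le)$ such that for every $a\in L$ the element $\neg a=\max\{b\in L: a\wedge b\le c\ \text{for all } c\in L\}$ exists; it is bounded with bottom $0$ and top $1$. For $a\in L$, $\Box a=\max\{b\in L: a\vee\neg b=1\}$ and $\Diamond a=\min\{b\in L: \neg a\vee b=1\}$. *)

theory Defs
  imports Main
begin

definition is_max :: "'a::order set \<Rightarrow> 'a \<Rightarrow> bool" where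
  "is_max S m \<longleftrightarrow> m \<in> S \<and> (\<forall>x\<in>S. x \<le> m)"

definition is_min :: "'a::order set \<Rightarrow> 'a \<Rightarrow> bool" where
  "is_min S m \<longleftrightarrow> m \<in> S \<and> (\<forall>x\<in>S. m \<le> x)"

definition mc_set :: "'a::lattice \<Rightarrow> 'a set" where
  "mc_set a = {b. \<forall>c. inf a b \<le> c}"

definition mc_neg :: "'a::lattice \<Rightarrow> 'a" where
  "mc_neg a = (THE m. is_max (mc_set a) m)"

definition box_set :: "'a::bounded_lattice \<Rightarrow> 'a set" where
  "box_set a = {b. sup a (mc_neg b) = top}"

definition mc_box :: "'a::bounded_lattice \<Rightarrow> 'a" where
  "mc_box a = (THE m. is_max (box_set a) m)"

definition dia_set :: "'a::bounded_lattice \<Rightarrow> 'a set" where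
  "dia_set a = {b. sup (mc_neg a) b = top}"

definition mc_dia :: "'a::bounded_lattice \<Rightarrow> 'a" where
  "mc_dia a = (THE m. is_min (dia_set a) m)"

definition rimp_set :: "'a::lattice \<Rightarrow> 'a \<Rightarrow> 'a set" where
  "rimp_set a b = {c. inf a c \<le> b}"

definition rimp :: "'a::lattice \<Rightarrow> 'a \<Rightarrow> 'a" where
  "rimp a b = (THE m. is_max (rimp_set a b) m)"

end

theory Submission
  imports Defs
begin

text \<open>Each operation is characterised by a Galois-type equivalence:
  \<open>y \<le> \<not>x\<close> iff \<open>x \<sqinter> y = 0\<close>, \<open>c \<le> \<box>x\<close> iff \<open>x \<squnion> \<not>c = 1\<close>, \<open>\<diamond>x \<le> c\<close> iff \<open>\<not>x \<squnion> c = 1\<close>,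
  and \<open>c \<le> x \<rightarrow> y\<close> iff \<open>x \<sqinter> c \<le> y\<close>. Through them, (1) and (3) become the claim that
  some join equals \<open>1\<close>, which follows by distributing the meet of two joins already
  known to equal \<open>1\<close> (such as \<open>a \<squnion> \<not>\<box>a\<close> and \<open>\<not>a \<squnion> \<diamond>a\<close>). For (2), \<open>(a \<rightarrow> b) \<sqinter> \<not>b \<le> \<not>a\<close>
  gives \<open>a \<rightarrow> b \<le> \<not>a \<squnion> \<diamond>b\<close>, hence \<open>\<diamond>a \<le> \<diamond>b \<squnion> \<not>\<box>(a \<rightarrow> b)\<close>, and meeting with
  \<open>\<box>(a \<rightarrow> b)\<close> kills the last term.\<close>

lemma is_max_The:
  assumes "\<exists>m. is_max S m"
  shows "is_max S (THE m. is_max S m)"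
  by (rule theI') (use assms in \<open>auto simp: is_max_def intro: order_antisym\<close>)

lemma is_min_The:
  assumes "\<exists>m. is_min S m"
  shows "is_min S (THE m. is_min S m)"
  by (rule theI') (use assms in \<open>auto simp: is_min_def intro: order_antisym\<close>)

lemma le_mc_neg_iff:
  fixes x y :: "'a::bounded_lattice"
  assumes "\<exists>m. is_max (mc_set x) m"
  shows "y \<le> mc_neg x \<longleftrightarrow> inf x y = bot"
proof
  have neg: "inf x (mc_neg x) = bot"
    using is_max_The[OF assms] unfolding is_max_def mc_set_def mc_neg_def
    by (auto intro: order_antisym)
  assume "y \<le> mc_neg x"
  then have "inf x y \<le> inf x (mc_neg x)" by (simp add: le_infI2)
  with neg show "inf x y = bot" by (simp add: bot_unique)
next
  assume "inf x y = bot"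
  then have "y \<in> mc_set x" unfolding mc_set_def by auto
  then show "y \<le> mc_neg x"
    using is_max_The[OF assms] unfolding is_max_def mc_neg_def by blast
qed

lemma inf_mc_neg:
  fixes x :: "'a::bounded_lattice"
  assumes "\<exists>m. is_max (mc_set x) m"
  shows "inf x (mc_neg x) = bot"
  using le_mc_neg_iff[OF assms] by blast

lemma mc_neg_antimono:
  fixes x y :: "'a::bounded_lattice"
  assumes "\<exists>m. is_max (mc_set x) m" and "\<exists>m. is_max (mc_set y) m" and "x \<le> y"
  shows "mc_neg y \<le> mc_neg x"
proof -
  have "inf x (mc_neg y) \<le> inf y (mc_neg y)" using \<open>x \<le> y\<close> by (rule inf_mono) simp
  then show ?thesis
    using inf_mc_neg[OF assms(2)] le_mc_neg_iff[OF assms(1)] by (simp add: bot_unique)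
qed

lemma sup_mc_neg_le_mc_neg_inf:
  fixes x y :: "'a::bounded_lattice"
  assumes "\<forall>z::'a. \<exists>m. is_max (mc_set z) m"
  shows "sup (mc_neg x) (mc_neg y) \<le> mc_neg (inf x y)"
  using assms by (intro sup_least mc_neg_antimono) simp_all

lemma le_mc_box_iff:
  fixes x c :: "'a::bounded_lattice"
  assumes "\<forall>z::'a. \<exists>m. is_max (mc_set z) m" and "\<exists>m. is_max (box_set x) m"
  shows "c \<le> mc_box x \<longleftrightarrow> sup x (mc_neg c) = top"
proof
  assume "c \<le> mc_box x"
  then have "sup x (mc_neg (mc_box x)) \<le> sup x (mc_neg c)"
    using assms(1) by (intro sup_mono mc_neg_antimono) simp_all
  moreover have "sup x (mc_neg (mc_box x)) = top"
    using is_max_The[OF assms(2)] unfolding is_max_def box_set_def mc_box_def by simp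
  ultimately show "sup x (mc_neg c) = top" by (simp add: top_unique)
next
  assume "sup x (mc_neg c) = top"
  then show "c \<le> mc_box x"
    using is_max_The[OF assms(2)] unfolding is_max_def box_set_def mc_box_def by simp
qed

lemma mc_dia_le_iff:
  fixes x c :: "'a::bounded_lattice"
  assumes "\<exists>m. is_min (dia_set x) m"
  shows "mc_dia x \<le> c \<longleftrightarrow> sup (mc_neg x) c = top"
proof
  assume "mc_dia x \<le> c"
  then have "sup (mc_neg x) (mc_dia x) \<le> sup (mc_neg x) c" by (rule sup_mono[OF order_refl])
  moreover have "sup (mc_neg x) (mc_dia x) = top"
    using is_min_The[OF assms] unfolding is_min_def dia_set_def mc_dia_def by simp
  ultimately show "sup (mc_neg x) c = top" by (simp add: top_unique)
next
  assume "sup (mc_neg x) c = top"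
  then show "mc_dia x \<le> c"
    using is_min_The[OF assms] unfolding is_min_def dia_set_def mc_dia_def by simp
qed

lemma le_rimp_iff:
  fixes x y c :: "'a::lattice"
  assumes "\<exists>m. is_max (rimp_set x y) m"
  shows "c \<le> rimp x y \<longleftrightarrow> inf x c \<le> y"
proof
  have "inf x (rimp x y) \<le> y"
    using is_max_The[OF assms] unfolding is_max_def rimp_set_def rimp_def by simp
  moreover assume "c \<le> rimp x y"
  ultimately show "inf x c \<le> y" by (meson inf_mono order_refl order_trans)
next
  assume "inf x c \<le> y"
  then show "c \<le> rimp x y"
    using is_max_The[OF assms] unfolding is_max_def rimp_set_def rimp_def by simp
qed

lemma mc_box_rimp_le_rimp_mc_box:
  fixes a b :: "'a::{distrib_lattice, bounded_lattice}"
  assumes meet_compl: "\<forall>x::'a. \<exists>m. is_max (mc_set x) m"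
    and box_ex: "\<forall>x::'a. \<exists>m. is_max (box_set x) m"
    and rimp_ex: "\<forall>x y::'a. \<exists>m. is_max (rimp_set x y) m"
  shows "mc_box (rimp a b) \<le> rimp (mc_box a) (mc_box b)"
proof -
  let ?r = "rimp a b" and ?x = "mc_box a" and ?y = "mc_box (rimp a b)"
  note box_iff = le_mc_box_iff[OF meet_compl box_ex[rule_format]]
  have "top = inf (sup a (mc_neg ?x)) (sup ?r (mc_neg ?y))"
    using box_iff[of ?x a] box_iff[of ?y ?r] by simp
  also have "\<dots> \<le> sup (inf a ?r) (sup (mc_neg ?x) (mc_neg ?y))"
    by (simp add: inf_sup_distrib1 inf_sup_distrib2 le_supI1 le_supI2 le_infI1 le_infI2)
  also have "\<dots> \<le> sup b (mc_neg (inf ?x ?y))"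
    using le_rimp_iff[OF rimp_ex[rule_format], of ?r a b]
      sup_mc_neg_le_mc_neg_inf[OF meet_compl, of ?x ?y]
    by (intro sup_mono) simp_all
  finally have "inf ?x ?y \<le> mc_box b"
    using box_iff by (simp add: top_unique)
  then show ?thesis using le_rimp_iff[OF rimp_ex[rule_format]] by blast
qed

lemma mc_box_rimp_le_rimp_mc_dia:
  fixes a b :: "'a::{distrib_lattice, bounded_lattice}"
  assumes meet_compl: "\<forall>x::'a. \<exists>m. is_max (mc_set x) m"
    and box_ex: "\<forall>x::'a. \<exists>m. is_max (box_set x) m"
    and dia_ex: "\<forall>x::'a. \<exists>m. is_min (dia_set x) m"
    and rimp_ex: "\<forall>x y::'a. \<exists>m. is_max (rimp_set x y) m"
  shows "mc_box (rimp a b) \<le> rimp (mc_dia a) (mc_dia b)"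
proof -
  let ?r = "rimp a b" and ?y = "mc_box (rimp a b)" and ?e = "mc_dia b"
  note neg_iff = le_mc_neg_iff[OF meet_compl[rule_format]]
  note dia_iff = mc_dia_le_iff[OF dia_ex[rule_format]]
  have "inf a (inf ?r (mc_neg b)) = inf (inf a ?r) (mc_neg b)" by (simp add: inf_aci)
  also have "\<dots> \<le> inf b (mc_neg b)"
    using le_rimp_iff[OF rimp_ex[rule_format], of ?r a b] by (simp add: le_infI1)
  finally have "inf ?r (mc_neg b) \<le> mc_neg a"
    using inf_mc_neg[OF meet_compl[rule_format], of b] neg_iff by (simp add: bot_unique)
  then have "inf ?r (sup (mc_neg b) ?e) \<le> sup (mc_neg a) ?e"
    by (simp add: inf_sup_distrib1 le_supI1 le_supI2 le_infI2)
  then have "?r \<le> sup (mc_neg a) ?e"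
    using dia_iff[of b ?e] by simp
  then have "top \<le> sup (mc_neg a) (sup ?e (mc_neg ?y))"
    using le_mc_box_iff[OF meet_compl box_ex[rule_format], of ?y ?r]
    by (metis sup_assoc sup_mono order_refl)
  then have "mc_dia a \<le> sup ?e (mc_neg ?y)"
    using dia_iff by (simp add: top_unique)
  then have "inf (mc_dia a) ?y \<le> inf (sup ?e (mc_neg ?y)) ?y"
    by (rule inf_mono) simp
  also have "\<dots> = sup (inf ?e ?y) (inf (mc_neg ?y) ?y)" by (rule inf_sup_distrib2)
  also have "\<dots> \<le> ?e"
    using inf_mc_neg[OF meet_compl[rule_format], of ?y] by (simp add: inf.commute le_infI1)
  finally show ?thesis using le_rimp_iff[OF rimp_ex[rule_format]] by blast
qed

lemma rimp_mc_dia_mc_box_le_mc_box_rimp: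
  fixes a b :: "'a::{distrib_lattice, bounded_lattice}"
  assumes meet_compl: "\<forall>x::'a. \<exists>m. is_max (mc_set x) m"
    and box_ex: "\<forall>x::'a. \<exists>m. is_max (box_set x) m"
    and dia_ex: "\<forall>x::'a. \<exists>m. is_min (dia_set x) m"
    and rimp_ex: "\<forall>x y::'a. \<exists>m. is_max (rimp_set x y) m"
  shows "rimp (mc_dia a) (mc_box b) \<le> mc_box (rimp a b)"
proof -
  let ?r = "rimp a b" and ?z = "rimp (mc_dia a) (mc_box b)"
    and ?d = "mc_dia a" and ?x = "mc_box b"
  note rimp_iff = le_rimp_iff[OF rimp_ex[rule_format]]
  note box_iff = le_mc_box_iff[OF meet_compl box_ex[rule_format]]
  have neg_a: "mc_neg a \<le> ?r"
    using rimp_iff inf_mc_neg[OF meet_compl[rule_format], of a] by simp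
  have b_le: "b \<le> ?r" using rimp_iff by simp
  have "inf ?z (inf ?d (mc_neg ?x)) = inf (inf ?d ?z) (mc_neg ?x)" by (simp add: inf_aci)
  also have "\<dots> \<le> inf ?x (mc_neg ?x)" using rimp_iff[of ?z ?d ?x] by (simp add: le_infI1)
  finally have d_le: "inf ?d (mc_neg ?x) \<le> mc_neg ?z"
    using inf_mc_neg[OF meet_compl[rule_format], of ?x] le_mc_neg_iff[OF meet_compl[rule_format]]
    by (simp add: bot_unique)
  have "top = inf (sup (mc_neg a) ?d) (sup b (mc_neg ?x))"
    using box_iff[of ?x b] mc_dia_le_iff[OF dia_ex[rule_format], of a ?d] by simp
  also have "\<dots> \<le> sup (sup (mc_neg a) b) (inf ?d (mc_neg ?x))"
    by (simp add: inf_sup_distrib1 inf_sup_distrib2 le_supI1 le_supI2 le_infI1 le_infI2)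
  also have "\<dots> \<le> sup ?r (mc_neg ?z)"
    using neg_a b_le d_le by (simp add: le_supI1 le_supI2)
  finally show ?thesis using box_iff by (simp add: top_unique)
qed

theorem proposition27:
  fixes a b :: "'a::{distrib_lattice, bounded_lattice}"
  assumes meet_compl: "\<forall>x::'a. \<exists>m. is_max (mc_set x) m"
    and box_ex: "\<forall>x::'a. \<exists>m. is_max (box_set x) m"
    and dia_ex: "\<forall>x::'a. \<exists>m. is_min (dia_set x) m"
    and rimp_ex: "\<forall>x y::'a. \<exists>m. is_max (rimp_set x y) m"
  shows "mc_box (rimp a b) \<le> rimp (mc_box a) (mc_box b)
         \<and> mc_box (rimp a b) \<le> rimp (mc_dia a) (mc_dia b)
         \<and> rimp (mc_dia a) (mc_box b) \<le> mc_box (rimp a b)"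
  using mc_box_rimp_le_rimp_mc_box[OF meet_compl box_ex rimp_ex]
    mc_box_rimp_le_rimp_mc_dia[OF assms] rimp_mc_dia_mc_box_le_mc_box_rimp[OF assms]
  by blast

end
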